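(* Let $q$ be a prime power and let $T\in\mathbb F_q[X,Y,Z]$ be a linear PTR polynomial over $\mathbb F_q$, written as $T(X,Y,Z)=Z+XYZ\,M_1(X,Y,Z)+M_2(X,Y)$ with $M_1(X,Y,Z)=\sum_{i,j,k=0}^{q-3}b_{ijk}X^iY^jZ^k$ and $M_2(X,Y)=\sum_{i,j=1}^{q-2}c_{ij}X^iY^j$. Then $$\sum_{i=0}^{q-3}b_{ijk}=\sum_{i=0}^{q-3}b_{jik}$$ for all $0\le j\le q-3$ and $1\le k\le q-3$.
   Context: A PTR polynomial over $\mathbb F_q$ is a reduced polynomial $T\in\mathbb F_q[X,Y,Z]$ (degree less than $q$ in each variable) satisfying: (a) $T(a,0,z)=T(0,b,z)=z$ for all $a,b,z$; (b) $T(x,1,0)=x$ and $T(1,y,0)=y$ for all $x,y$; (c) for all $a,b,c,d$ with $a\neq c$ there is a unique $x$ with $T(x,a,b)=T(x,c,d)$; (d) for all $a,b,c$ there is a unique $z$ with $T(a,b,z)=c$; (e) for all $a,b,c,d$ with $a\neq c$ there is a unique pair $(y,z)$ with $T(a,y,z)=b$ and $T(c,y,z)=d$ (all variables in $\mathbb F_q$). Every PTR polynomial can be written in the displayed form with these degree bounds. Define $x\oplus y=T(1,x,y)$, $x\odot y=T(x,y,0)$; $T$ is linear if $T(x,y,z)=(x\odot y)\oplus z$ for all $x,y,z\in\mathbb F_q$. *)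

theory Defs
  imports "HOL-Library.Cardinality"
begin

definition ptr_fun :: "('a::{finite,field} \<Rightarrow> 'a \<Rightarrow> 'a \<Rightarrow> 'a) \<Rightarrow> bool" where
  "ptr_fun T \<longleftrightarrow>
     (\<forall>a b z. T a 0 z = z \<and> T 0 b z = z) \<and>
     (\<forall>x y. T x 1 0 = x \<and> T 1 y 0 = y) \<and>
     (\<forall>a b c d. a \<noteq> c \<longrightarrow> (\<exists>!x. T x a b = T x c d)) \<and>
     (\<forall>a b c. \<exists>!z. T a b z = c) \<and>
     (\<forall>a b c d. a \<noteq> c \<longrightarrow> (\<exists>!(y, z). T a y z = b \<and> T c y z = d))"

definition ptr_oplus :: "('a \<Rightarrow> 'a \<Rightarrow> 'a \<Rightarrow> 'a) \<Rightarrow> 'a \<Rightarrow> 'a \<Rightarrow> 'a::{finite,field}" where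
  "ptr_oplus T x y = T 1 x y"

definition ptr_odot :: "('a \<Rightarrow> 'a \<Rightarrow> 'a \<Rightarrow> 'a) \<Rightarrow> 'a \<Rightarrow> 'a \<Rightarrow> 'a::{finite,field}" where
  "ptr_odot T x y = T x y 0"

definition ptr_linear :: "('a::{finite,field} \<Rightarrow> 'a \<Rightarrow> 'a \<Rightarrow> 'a) \<Rightarrow> bool" where
  "ptr_linear T \<longleftrightarrow> (\<forall>x y z. T x y z = ptr_oplus T (ptr_odot T x y) z)"

text \<open>It is reduced (degree < q in each variable), so it is determined by its function.\<close>
definition M1 :: "(nat \<Rightarrow> nat \<Rightarrow> nat \<Rightarrow> 'a) \<Rightarrow> 'a \<Rightarrow> 'a \<Rightarrow> 'a \<Rightarrow> 'a::{finite,field}" where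
  "M1 b x y z = (\<Sum>i\<in>{..<CARD('a) - 2}. \<Sum>j\<in>{..<CARD('a) - 2}. \<Sum>k\<in>{..<CARD('a) - 2}.
                    b i j k * x ^ i * y ^ j * z ^ k)"

definition M2 :: "(nat \<Rightarrow> nat \<Rightarrow> 'a) \<Rightarrow> 'a \<Rightarrow> 'a \<Rightarrow> 'a::{finite,field}" where
  "M2 c x y = (\<Sum>i\<in>{1..CARD('a) - 2}. \<Sum>j\<in>{1..CARD('a) - 2}. c i j * x ^ i * y ^ j)"

definition T_form :: "(nat \<Rightarrow> nat \<Rightarrow> nat \<Rightarrow> 'a) \<Rightarrow> (nat \<Rightarrow> nat \<Rightarrow> 'a) \<Rightarrow> 'a \<Rightarrow> 'a \<Rightarrow> 'a \<Rightarrow> 'a::{finite,field}" where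
  "T_form b c x y z = z + x * y * z * M1 b x y z + M2 c x y"

end

theory Submission
  imports Defs "HOL-Computational_Algebra.Polynomial"
begin

text \<open>For a linear PTR polynomial, \<open>T(x,1,z) = (x \<odot> 1) \<oplus> z = x \<oplus> z = (1 \<odot> x) \<oplus> z = T(1,x,z)\<close>.
  In the normal form \<open>T = Z + XYZ M\<^sub>1 + M\<^sub>2\<close> the identities \<open>T(x,1,0) = T(1,x,0) = x\<close> force
  \<open>M\<^sub>2(x,1) = M\<^sub>2(1,x)\<close>, so \<open>M\<^sub>1(x,1,z) = M\<^sub>1(1,x,z)\<close> for all nonzero \<open>x, z\<close>. Both sides are
  polynomials of degree at most \<open>q - 3\<close> in each of \<open>x\<close> and \<open>z\<close>, so agreeing on the \<open>q - 1\<close>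
  nonzero values makes them equal as polynomials; the coefficient of \<open>x\<^sup>j z\<^sup>k\<close> on either side
  is a row respectively column sum of \<open>b\<close>.\<close>

lemma power_sum_eq_zero_on_nonzero_imp_coeff_eq_zero:
  fixes f :: "nat \<Rightarrow> 'a::{finite,field}"
  assumes vanish: "\<And>z. z \<noteq> 0 \<Longrightarrow> (\<Sum>m<n. f m * z ^ m) = 0"
    and "n < CARD('a)" and "k < n"
  shows "f k = 0"
proof -
  define p where "p = (\<Sum>m<n. monom (f m) m)"
  have "poly p z = (\<Sum>m<n. f m * z ^ m)" for z
    unfolding p_def by (simp add: poly_sum poly_monom)
  then have roots: "UNIV - {0} \<subseteq> {z. poly p z = 0}"
    using vanish by auto
  have "p = 0"
  proof (rule ccontr)
    assume "p \<noteq> 0"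
    have "CARD('a) - 1 = card (UNIV - {0::'a})"
      by (simp add: card_Diff_singleton)
    also have "\<dots> \<le> card {z. poly p z = 0}"
      using card_mono[OF poly_roots_finite[OF \<open>p \<noteq> 0\<close>] roots] .
    also have "\<dots> \<le> degree p"
      using card_poly_roots_bound[OF \<open>p \<noteq> 0\<close>] .
    also have "\<dots> \<le> n - 1"
      unfolding p_def by (rule degree_sum_le) (auto intro: order.trans[OF degree_monom_le])
    finally show False
      using \<open>n < CARD('a)\<close> \<open>k < n\<close> by linarith
  qed
  then have "coeff p k = 0" by simp
  then show ?thesis
    using \<open>k < n\<close> unfolding p_def by (simp add: coeff_sum)
qed

lemma bivariate_power_sum_eq_zero_on_nonzero_imp_coeff_eq_zero:
  fixes f :: "nat \<Rightarrow> nat \<Rightarrow> 'a::{finite,field}"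
  assumes vanish: "\<And>x z. x \<noteq> 0 \<Longrightarrow> z \<noteq> 0 \<Longrightarrow> (\<Sum>k<n. (\<Sum>m<n. f m k * x ^ m) * z ^ k) = 0"
    and n: "n < CARD('a)" and "m < n" and "k < n"
  shows "f m k = 0"
proof -
  have "(\<Sum>m<n. f m k * x ^ m) = 0" if "x \<noteq> 0" for x
    by (rule power_sum_eq_zero_on_nonzero_imp_coeff_eq_zero[OF vanish[OF that] n \<open>k < n\<close>])
  then show ?thesis
    by (rule power_sum_eq_zero_on_nonzero_imp_coeff_eq_zero[OF _ n \<open>m < n\<close>])
qed

lemma ptr_linear_swap_one:
  assumes "ptr_linear T" and "\<And>x. T x 1 0 = x" and "\<And>y. T 1 y 0 = y"
  shows "T x 1 z = T 1 x z"
  using assms unfolding ptr_linear_def ptr_oplus_def ptr_odot_def by metis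

lemma M1_at_second_one:
  fixes x z :: "'a::{finite,field}"
  defines "N \<equiv> CARD('a) - 2"
  shows "M1 b x 1 z = (\<Sum>k<N. (\<Sum>i<N. (\<Sum>j<N. b i j k) * x ^ i) * z ^ k)"
proof -
  have "M1 b x 1 z = (\<Sum>i<N. \<Sum>j<N. \<Sum>k<N. b i j k * x ^ i * z ^ k)"
    unfolding M1_def N_def by simp
  also have "\<dots> = (\<Sum>i<N. \<Sum>k<N. \<Sum>j<N. b i j k * x ^ i * z ^ k)"
    by (rule sum.cong[OF refl], rule sum.swap)
  also have "\<dots> = (\<Sum>k<N. \<Sum>i<N. \<Sum>j<N. b i j k * x ^ i * z ^ k)"
    by (rule sum.swap)
  also have "\<dots> = (\<Sum>k<N. (\<Sum>i<N. (\<Sum>j<N. b i j k) * x ^ i) * z ^ k)"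
    by (simp add: sum_distrib_right)
  finally show ?thesis .
qed

lemma M1_at_first_one:
  fixes y z :: "'a::{finite,field}"
  defines "N \<equiv> CARD('a) - 2"
  shows "M1 b 1 y z = (\<Sum>k<N. (\<Sum>j<N. (\<Sum>i<N. b i j k) * y ^ j) * z ^ k)"
proof -
  have "M1 b 1 y z = (\<Sum>i<N. \<Sum>j<N. \<Sum>k<N. b i j k * y ^ j * z ^ k)"
    unfolding M1_def N_def by simp
  also have "\<dots> = (\<Sum>j<N. \<Sum>i<N. \<Sum>k<N. b i j k * y ^ j * z ^ k)"
    by (rule sum.swap)
  also have "\<dots> = (\<Sum>j<N. \<Sum>k<N. \<Sum>i<N. b i j k * y ^ j * z ^ k)"
    by (rule sum.cong[OF refl], rule sum.swap)
  also have "\<dots> = (\<Sum>k<N. \<Sum>j<N. \<Sum>i<N. b i j k * y ^ j * z ^ k)"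
    by (rule sum.swap)
  also have "\<dots> = (\<Sum>k<N. (\<Sum>j<N. (\<Sum>i<N. b i j k) * y ^ j) * z ^ k)"
    by (simp add: sum_distrib_right)
  finally show ?thesis .
qed

lemma M1_symmetric_at_one:
  assumes "ptr_fun (T_form b c)" and "ptr_linear (T_form b c)"
    and "x \<noteq> 0" and "z \<noteq> 0"
  shows "M1 b x 1 z = M1 b 1 x z"
proof -
  have T_one: "T_form b c x 1 0 = x" "T_form b c 1 x 0 = x" for x
    using \<open>ptr_fun (T_form b c)\<close> unfolding ptr_fun_def by auto
  then have "M2 c x 1 = M2 c 1 x"
    unfolding T_form_def by simp
  moreover have "T_form b c x 1 z = T_form b c 1 x z"
    using ptr_linear_swap_one[OF \<open>ptr_linear (T_form b c)\<close>] T_one by blast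
  ultimately have "x * z * M1 b x 1 z = x * z * M1 b 1 x z"
    unfolding T_form_def by (simp add: algebra_simps)
  then show ?thesis
    using \<open>x \<noteq> 0\<close> \<open>z \<noteq> 0\<close> by simp
qed

theorem corollary4p9:
  fixes b :: "nat \<Rightarrow> nat \<Rightarrow> nat \<Rightarrow> 'a::{finite,field}"
    and c :: "nat \<Rightarrow> nat \<Rightarrow> 'a"
  assumes "ptr_fun (T_form b c)"
    and "ptr_linear (T_form b c)"
    and "j < CARD('a) - 2"
    and "1 \<le> k" and "k < CARD('a) - 2"
  shows "(\<Sum>i\<in>{..<CARD('a) - 2}. b i j k) = (\<Sum>i\<in>{..<CARD('a) - 2}. b j i k)"
proof -
  define N where "N = CARD('a) - 2"
  define D where "D m k = (\<Sum>i<N. b m i k) - (\<Sum>i<N. b i m k)" for m k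
  have "(\<Sum>k<N. (\<Sum>m<N. D m k * x ^ m) * z ^ k) = 0" if "x \<noteq> 0" "z \<noteq> 0" for x z :: 'a
    using M1_symmetric_at_one[OF assms(1,2) that] M1_at_first_one[of b x z] M1_at_second_one[of b x z]
    unfolding D_def N_def by (simp add: left_diff_distrib sum_subtractf)
  moreover have "N < CARD('a)"
    unfolding N_def by simp
  ultimately have "D j k = 0"
    using bivariate_power_sum_eq_zero_on_nonzero_imp_coeff_eq_zero assms(3,5) unfolding N_def by blast
  then show ?thesis
    unfolding D_def N_def by simp
qed

end
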